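(* Let $k$ be a field, $R=k[x_1,\ldots,x_n]$, and let $I$ be an almost reverse lexicographic ideal whose last generator is $M_\omega=x_1^{\omega_1}\cdots x_\mu^{\omega_\mu}$ with $\omega_\mu>0$, $\mu\ge2$. Let $1\le i\le\mu-1$. For every $\alpha\in\mathcal{I}_{i-1}$ and every $\beta\in\mathcal{I}_i$, \[|\alpha|+f_i(\alpha)\le f_i(0)\le|\beta|+f_{i+1}(\beta),\] where $0\in\mathbb{Z}^{i-1}$ is the zero tuple. In particular, if $N,M\in\mathcal{G}(I)$ with $\max N<\max M$, then $\deg N\le\deg M$.
   Context: Monomial order: degree reverse lexicographic: for $M=x^\alpha,N=x^\beta$, $M>N$ iff $\deg M>\deg N$, or degrees are equal and for the largest $s$ with $\alpha_s\neq\beta_s$ one has $\alpha_s<\beta_s$. For $\alpha\in\mathbb{Z}^s_{\ge0}$, $x^\alpha=x_1^{\alpha_1}\cdots x_s^{\alpha_s}$, $|\alpha|=\sum\alpha_j$, and $\alpha\le\beta$ iff $x^\alpha\le x^\beta$. Almost reverse lexicographic: for every monomial $M$ and every minimal monomial generator $N$ of $I$ with $\deg M=\deg N$ and $M>N$, $M\in I$. $\mathcal{G}(I)$ is the minimal monomial generating set; $\max M$ is the largest $i$ with $x_i\mid M$. The last generator $M_\omega$ is the element of $\mathcal{G}(I)$ of maximal degree that is smallest in the order among elements of $\mathcal{G}(I)$ of that degree; $\mu=\max M_\omega$. $f_1=\min\{t:x_1^t\in I\}$; for $2\le i\le\mu$, $\alpha\in\mathbb{Z}^{i-1}_{\ge0}$,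 $f_i(\alpha)=\min\{t\ge0:x^\alpha x_i^t\in I\}$. For $1\le i\le\mu-2$, $\mathcal{I}_i=\{(\alpha_1,\ldots,\alpha_i)\in\mathbb{Z}^i_{\ge0}: 0\le\alpha_1<f_1,\ 0\le\alpha_j<f_j(\alpha_1,\ldots,\alpha_{j-1})\ (2\le j\le i)\}$, and $\mathcal{I}_{\mu-1}$ is the set of $(\alpha_1,\ldots,\alpha_{\mu-1})$ satisfying these inequalities for $j\le\mu-1$ together with $(\alpha_1,\ldots,\alpha_{\mu-1})\ge(\omega_1,\ldots,\omega_{\mu-1})$. Convention: $\mathcal{I}_0$ consists of the empty tuple $0\in\mathbb{Z}^0$, with $|0|=0$ and $f_1(0)=f_1$. *)

theory Defs
  imports Main
begin

text \<open>Monomials of k[x_1,...,x_n] are identified with exponent vectors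
  a :: nat => nat supported in {1..n}; x^a = x_1^(a 1) ... x_n^(a n).
  A monomial ideal is represented by its set of monomials.\<close>

type_synonym expo = "nat \<Rightarrow> nat"

definition monomial_in :: "nat \<Rightarrow> expo \<Rightarrow> bool" where
  "monomial_in n a \<longleftrightarrow> (\<forall>j. a j \<noteq> 0 \<longrightarrow> 1 \<le> j \<and> j \<le> n)"

definition mdeg :: "expo \<Rightarrow> nat" where
  "mdeg a = (\<Sum>j\<in>{j. a j \<noteq> 0}. a j)"

definition divides_mon :: "expo \<Rightarrow> expo \<Rightarrow> bool" where
  "divides_mon a b \<longleftrightarrow> (\<forall>j. a j \<le> b j)"

definition monomial_ideal :: "nat \<Rightarrow> expo set \<Rightarrow> bool" where
  "monomial_ideal n I \<longleftrightarrow> (\<forall>a\<in>I. monomial_in n a) \<and>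
     (\<forall>a b. a \<in> I \<and> monomial_in n b \<and> divides_mon a b \<longrightarrow> b \<in> I)"

text \<open>Degree reverse lexicographic order on monomials in the variables
  x_1..x_m: revlex_less m a b means x^a < x^b.\<close>
definition revlex_less :: "nat \<Rightarrow> expo \<Rightarrow> expo \<Rightarrow> bool" where
  "revlex_less m a b \<longleftrightarrow> mdeg a < mdeg b \<or>
     (mdeg a = mdeg b \<and> (\<exists>s\<in>{1..m}. a s \<noteq> b s \<and> (\<forall>t\<in>{s<..m}. a t = b t) \<and> b s < a s))"

definition revlex_le :: "nat \<Rightarrow> expo \<Rightarrow> expo \<Rightarrow> bool" where
  "revlex_le m a b \<longleftrightarrow> a = b \<or> revlex_less m a b"

definition mingens :: "expo set \<Rightarrow> expo set" where
  "mingens I = {a \<in> I. \<forall>b\<in>I. divides_mon b a \<longrightarrow> b = a}"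

definition almost_revlex :: "nat \<Rightarrow> expo set \<Rightarrow> bool" where
  "almost_revlex n I \<longleftrightarrow> (\<forall>M N. monomial_in n M \<and> N \<in> mingens I \<and> mdeg M = mdeg N
      \<and> revlex_less n N M \<longrightarrow> M \<in> I)"

definition maxvar :: "expo \<Rightarrow> nat" where
  "maxvar a = Max {j. a j \<noteq> 0}"

definition last_generator :: "nat \<Rightarrow> expo set \<Rightarrow> expo \<Rightarrow> bool" where
  "last_generator n I \<omega> \<longleftrightarrow> \<omega> \<in> mingens I \<and> (\<forall>g\<in>mingens I. mdeg g \<le> mdeg \<omega>) \<and>
     (\<forall>g\<in>mingens I. mdeg g = mdeg \<omega> \<longrightarrow> revlex_le n \<omega> g)"

definition trunc :: "nat \<Rightarrow> expo \<Rightarrow> expo" where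
  "trunc j a = (\<lambda>k. if k < j then a k else 0)"

text \<open>f_i(alpha) = min{t. x^alpha x_i^t \<in> I} for alpha \<in> Z^{i-1}
  (alpha supported in {1..i-1}); f 1 0 = f_1.\<close>
definition fI :: "expo set \<Rightarrow> nat \<Rightarrow> expo \<Rightarrow> nat" where
  "fI I i \<alpha> = (LEAST t. \<alpha>(i := t) \<in> I)"

definition Iset :: "expo set \<Rightarrow> expo \<Rightarrow> nat \<Rightarrow> nat \<Rightarrow> expo set" where
  "Iset I \<omega> \<mu> i = {\<alpha>. (\<forall>j. \<alpha> j \<noteq> 0 \<longrightarrow> 1 \<le> j \<and> j \<le> i) \<and>
      (\<forall>j\<in>{1..i}. \<alpha> j < fI I j (trunc j \<alpha>)) \<and>
      (i = \<mu> - 1 \<longrightarrow> revlex_le (\<mu> - 1) (trunc \<mu> \<omega>) \<alpha>)}"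

end

theory Submission
  imports Defs
begin

text \<open>Everything rests on one consequence of the almost reverse lexicographic property:
  if \<open>N\<close> is a minimal generator and \<open>x\<^sup>\<gamma>\<close> is a monomial in \<open>x\<^sub>1, ..., x\<^sub>s\<close> with
  \<open>deg \<gamma> \<ge> deg N\<close>, \<open>N\<close> also in \<open>x\<^sub>1, ..., x\<^sub>s\<close> and \<open>\<gamma>\<^sub>s < N\<^sub>s\<close>, then every divisor of \<open>x\<^sup>\<gamma>\<close> of
  degree \<open>deg N\<close> is revlex-larger than \<open>N\<close>, hence lies in \<open>I\<close>.

  Let \<open>d = f\<^sub>i(0)\<close>; the pure power \<open>x\<^sub>i^d\<close> is a minimal generator. For \<open>\<alpha>\<close> in \<open>\<I>\<^sub>i\<^sub>-\<^sub>1\<close> the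
  monomial \<open>x^\<alpha> x\<^sub>i^(d - |\<alpha>|)\<close> is revlex-larger than \<open>x\<^sub>i^d\<close>, while \<open>|\<alpha>| > d\<close> would put
  \<open>x^\<alpha>\<close> into \<open>I\<close>. For \<open>\<beta>\<close> in \<open>\<I>\<^sub>i\<close>, a minimal generator \<open>N\<close> dividing \<open>x^\<beta> x\<^sub>i\<^sub>+\<^sub>1^f\<close>,
  \<open>f = f\<^sub>i\<^sub>+\<^sub>1(\<beta>)\<close>, must involve \<open>x\<^sub>i\<^sub>+\<^sub>1\<close> since \<open>x^\<beta> \<notin> I\<close>; so \<open>x\<^sub>i^(deg N)\<close> is revlex-larger
  than \<open>N\<close> and \<open>d \<le> deg N \<le> |\<beta>| + f\<close>. The last generator is needed only to see that
  \<open>f\<^sub>i\<^sub>+\<^sub>1(\<beta>)\<close> is attained at all. The second claim is the first observation applied to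
  \<open>\<gamma> = N\<close> and the generator \<open>M\<close> with \<open>s = max M\<close>.\<close>

lemma mdeg_eq_sum: "monomial_in n a \<Longrightarrow> mdeg a = sum a {1..n}"
  unfolding mdeg_def monomial_in_def
  by (rule sum.mono_neutral_left) auto

lemma finite_support: "monomial_in n a \<Longrightarrow> finite {j. a j \<noteq> 0}"
  unfolding monomial_in_def by (rule finite_subset[of _ "{1..n}"]) auto

lemma maxvar_less_imp_zero: "finite {j. a j \<noteq> 0} \<Longrightarrow> maxvar a < t \<Longrightarrow> a t = 0"
  unfolding maxvar_def by (metis (mono_tags) Max_ge leD mem_Collect_eq)

lemma monomial_in_upd: "monomial_in n a \<Longrightarrow> j \<in> {1..n} \<Longrightarrow> monomial_in n (a(j := x))"
  unfolding monomial_in_def by auto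

lemma mdeg_upd:
  assumes "monomial_in n a" "j \<in> {1..n}"
  shows "mdeg (a(j := x)) + a j = mdeg a + x"
proof -
  have "sum (a(j := x)) ({1..n} - {j}) = sum a ({1..n} - {j})"
    by (rule sum.cong) auto
  moreover have "sum (a(j := x)) {1..n} = x + sum (a(j := x)) ({1..n} - {j})"
    using assms(2) by (subst sum.remove[of _ j]) auto
  moreover have "sum a {1..n} = a j + sum a ({1..n} - {j})"
    using assms(2) by (subst sum.remove[of _ j]) auto
  ultimately show ?thesis
    using mdeg_eq_sum[OF assms(1)] mdeg_eq_sum[OF monomial_in_upd[OF assms]] by simp
qed

lemma mdeg_power: "mdeg ((\<lambda>_. 0)(j := x)) = x"
proof (cases "x = 0")
  case False
  then have "{k. ((\<lambda>_. 0::nat)(j := x)) k \<noteq> 0} = {j}" by auto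
  then show ?thesis by (simp add: mdeg_def)
qed (simp add: mdeg_def)

lemma divides_mon_trans: "divides_mon a b \<Longrightarrow> divides_mon b c \<Longrightarrow> divides_mon a c"
  unfolding divides_mon_def using le_trans by blast

lemma divides_mon_zero: "divides_mon d a \<Longrightarrow> a t = 0 \<Longrightarrow> d t = 0"
  unfolding divides_mon_def by (metis le_zero_eq)

lemma monomial_in_divisor: "monomial_in n a \<Longrightarrow> divides_mon d a \<Longrightarrow> monomial_in n d"
  unfolding monomial_in_def divides_mon_def by (metis le_zero_eq)

lemma mdeg_divides_le: "monomial_in n a \<Longrightarrow> divides_mon d a \<Longrightarrow> mdeg d \<le> mdeg a"
  using monomial_in_divisor[of n a d] mdeg_eq_sum[of n]
  by (simp add: divides_mon_def sum_mono)

lemma mdeg_divides_less: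
  assumes "monomial_in n a" "divides_mon d a" "d \<noteq> a"
  shows "mdeg d < mdeg a"
proof -
  obtain j where "d j \<noteq> a j" using assms(3) by auto
  with assms(2) have "d j < a j" unfolding divides_mon_def by (simp add: le_neq_implies_less)
  with assms(1) have "j \<in> {1..n}" unfolding monomial_in_def by auto
  have "sum d {1..n} < sum a {1..n}"
    by (rule sum_strict_mono_ex1) (use assms(2) \<open>j \<in> {1..n}\<close> \<open>d j < a j\<close> in \<open>auto simp: divides_mon_def\<close>)
  then show ?thesis using mdeg_eq_sum monomial_in_divisor assms(1,2) by metis
qed

lemma mdeg_pos: "monomial_in n a \<Longrightarrow> a \<noteq> (\<lambda>_. 0) \<Longrightarrow> 0 < mdeg a"
  using mdeg_divides_less[of n a "\<lambda>_. 0"] by (simp add: divides_mon_def mdeg_def)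

lemma divisor_of_mdeg:
  "monomial_in n a \<Longrightarrow> k \<le> mdeg a \<Longrightarrow> \<exists>d. divides_mon d a \<and> mdeg d = k"
proof (induction "mdeg a - k" arbitrary: a)
  case 0
  then show ?case by (intro exI[of _ a]) (auto simp: divides_mon_def)
next
  case (Suc m)
  then have "a \<noteq> (\<lambda>_. 0)" by (auto simp: mdeg_def)
  then obtain j where j: "a j \<noteq> 0" by auto
  with Suc.prems have jn: "j \<in> {1..n}" unfolding monomial_in_def by auto
  define a' where "a' = a(j := a j - 1)"
  have "monomial_in n a'" unfolding a'_def using monomial_in_upd Suc.prems jn by blast
  moreover have "mdeg a' + 1 = mdeg a"
    using mdeg_upd[OF Suc.prems(1) jn, of "a j - 1"] j unfolding a'_def by simp
  moreover have "m = mdeg a' - k" "k \<le> mdeg a'" using Suc.hyps(2) \<open>mdeg a' + 1 = mdeg a\<close> by linarith+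
  ultimately obtain d where "divides_mon d a'" "mdeg d = k"
    using Suc.hyps(1) by blast
  moreover have "divides_mon a' a" unfolding a'_def divides_mon_def by auto
  ultimately show ?case using divides_mon_trans by blast
qed

locale almost_revlex_ideal =
  fixes n :: nat and I :: "expo set"
  assumes monomial_ideal: "monomial_ideal n I"
    and almost_revlex: "almost_revlex n I"
begin

lemma monomial_in_mem: "a \<in> I \<Longrightarrow> monomial_in n a"
  using monomial_ideal unfolding monomial_ideal_def by blast

lemma mem_of_divides: "a \<in> I \<Longrightarrow> monomial_in n b \<Longrightarrow> divides_mon a b \<Longrightarrow> b \<in> I"
  using monomial_ideal unfolding monomial_ideal_def by blast

lemma mingens_divides: "a \<in> I \<Longrightarrow> \<exists>N\<in>mingens I. divides_mon N a"
proof (induction "mdeg a" arbitrary: a rule: less_induct)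
  case less
  show ?case
  proof (cases "a \<in> mingens I")
    case True
    then show ?thesis by (auto simp: divides_mon_def)
  next
    case False
    with less.prems obtain b where b: "b \<in> I" "divides_mon b a" "b \<noteq> a"
      unfolding mingens_def by blast
    then have "mdeg b < mdeg a" using mdeg_divides_less monomial_in_mem less.prems by blast
    then show ?thesis using less.hyps b divides_mon_trans by blast
  qed
qed

lemma almost_revlex_mem:
  assumes "N \<in> mingens I" "monomial_in n \<delta>" "mdeg \<delta> = mdeg N"
    "s \<in> {1..n}" "\<delta> s < N s" "\<forall>t\<in>{s<..n}. \<delta> t = N t"
  shows "\<delta> \<in> I"
proof -
  have "revlex_less n N \<delta>" unfolding revlex_less_def
    using assms(3-6) by (intro disjI2 conjI bexI[of _ s]) auto
  then show ?thesis using almost_revlex assms(1-3) unfolding almost_revlex_def by blast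
qed

lemma divisor_mem_of_mdeg_ge:
  assumes "N \<in> mingens I" "monomial_in n \<gamma>" "mdeg N \<le> mdeg \<gamma>"
    "s \<in> {1..n}" "\<gamma> s < N s" "\<forall>t>s. \<gamma> t = 0" "\<forall>t>s. N t = 0"
  shows "\<exists>\<delta>. divides_mon \<delta> \<gamma> \<and> mdeg \<delta> = mdeg N \<and> \<delta> \<in> I"
proof -
  obtain \<delta> where \<delta>: "divides_mon \<delta> \<gamma>" "mdeg \<delta> = mdeg N"
    using divisor_of_mdeg assms(2,3) by blast
  have "\<delta> \<in> I"
  proof (rule almost_revlex_mem[OF assms(1) _ \<delta>(2) assms(4)])
    show "monomial_in n \<delta>" using monomial_in_divisor assms(2) \<delta>(1) by blast
    show "\<delta> s < N s" using \<delta>(1) assms(5) unfolding divides_mon_def using le_less_trans by blast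
    show "\<forall>t\<in>{s<..n}. \<delta> t = N t" using \<delta>(1) assms(6,7) divides_mon_zero by auto
  qed
  with \<delta> show ?thesis by blast
qed

lemma mem_of_mdeg_ge:
  assumes "N \<in> mingens I" "monomial_in n \<gamma>" "mdeg N \<le> mdeg \<gamma>"
    "s \<in> {1..n}" "\<gamma> s < N s" "\<forall>t>s. \<gamma> t = 0" "\<forall>t>s. N t = 0"
  shows "\<gamma> \<in> I"
  using divisor_mem_of_mdeg_ge[OF assms] mem_of_divides assms(2) by blast

lemma mingens_mdeg_mono_maxvar:
  assumes N: "N \<in> mingens I" and M: "M \<in> mingens I" and lt: "maxvar N < maxvar M"
  shows "mdeg N \<le> mdeg M"
proof (rule ccontr)
  assume gt: "\<not> mdeg N \<le> mdeg M"
  have mN: "monomial_in n N" and mM: "monomial_in n M"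
    using N M monomial_in_mem unfolding mingens_def by auto
  let ?s = "maxvar M"
  have minimal: "b = N" if "b \<in> I" "divides_mon b N" for b
    using N that unfolding mingens_def by blast
  have "M \<noteq> (\<lambda>_. 0)"
  proof
    assume "M = (\<lambda>_. 0)"
    then have "M = N" using minimal M unfolding mingens_def divides_mon_def by simp
    with lt show False by simp
  qed
  then have "?s \<in> {j. M j \<noteq> 0}"
    unfolding maxvar_def by (intro Max_in finite_support[OF mM]) auto
  then have M_s: "M ?s \<noteq> 0" by simp
  have "\<exists>\<delta>. divides_mon \<delta> N \<and> mdeg \<delta> = mdeg M \<and> \<delta> \<in> I"
  proof (rule divisor_mem_of_mdeg_ge[OF M mN])
    show "mdeg M \<le> mdeg N" using gt by simp
    show "?s \<in> {1..n}" using M_s mM unfolding monomial_in_def by simp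
    show "N ?s < M ?s" using M_s lt maxvar_less_imp_zero[OF finite_support[OF mN]] by simp
    show "\<forall>t>?s. N t = 0" using lt maxvar_less_imp_zero[OF finite_support[OF mN]] by simp
    show "\<forall>t>?s. M t = 0" using maxvar_less_imp_zero[OF finite_support[OF mM]] by simp
  qed
  then obtain \<delta> where "divides_mon \<delta> N" "mdeg \<delta> = mdeg M" "\<delta> \<in> I" by blast
  then have "\<delta> = N" using minimal by blast
  with \<open>mdeg \<delta> = mdeg M\<close> gt show False by simp
qed

end

lemma Iset_support: "\<alpha> \<in> Iset I \<omega> \<mu> i \<Longrightarrow> \<alpha> j \<noteq> 0 \<Longrightarrow> 1 \<le> j \<and> j \<le> i"
  unfolding Iset_def by blast

lemma Iset_monomial_in: "\<alpha> \<in> Iset I \<omega> \<mu> i \<Longrightarrow> i \<le> n \<Longrightarrow> monomial_in n \<alpha>"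
  unfolding monomial_in_def using Iset_support by fastforce

lemma Iset_zero: "\<alpha> \<in> Iset I \<omega> \<mu> i \<Longrightarrow> i < t \<Longrightarrow> \<alpha> t = 0"
  using Iset_support by fastforce

lemma Iset_not_mem:
  assumes "\<alpha> \<in> Iset I \<omega> \<mu> i" "1 \<le> i"
  shows "\<alpha> \<notin> I"
proof -
  have "(trunc i \<alpha>)(i := \<alpha> i) = \<alpha>"
    using Iset_zero[OF assms(1)] by (auto simp: trunc_def not_less_iff_gr_or_eq)
  moreover have "\<alpha> i < fI I i (trunc i \<alpha>)"
    using assms unfolding Iset_def by auto
  ultimately show ?thesis unfolding fI_def by (metis not_less_Least)
qed

locale last_generator_ideal = almost_revlex_ideal +
  fixes \<omega> :: expo and \<mu> :: nat
  assumes last_generator: "last_generator n I \<omega>"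
    and \<mu>_eq: "\<mu> = maxvar \<omega>"
    and \<omega>_\<mu>_pos: "\<omega> \<mu> > 0"
begin

lemma \<omega>_mingens: "\<omega> \<in> mingens I"
  using last_generator unfolding last_generator_def by blast

lemma monomial_in_\<omega>: "monomial_in n \<omega>"
  using \<omega>_mingens monomial_in_mem unfolding mingens_def by blast

lemma \<mu>_range: "\<mu> \<in> {1..n}"
  using monomial_in_\<omega> \<omega>_\<mu>_pos unfolding monomial_in_def by auto

lemma \<omega>_zero: "\<mu> < t \<Longrightarrow> \<omega> t = 0"
  using maxvar_less_imp_zero[OF finite_support[OF monomial_in_\<omega>]] \<mu>_eq by blast

lemma mem_of_mdeg_ge_\<omega>:
  "monomial_in n \<gamma> \<Longrightarrow> mdeg \<omega> \<le> mdeg \<gamma> \<Longrightarrow> \<gamma> \<mu> < \<omega> \<mu> \<Longrightarrow> \<forall>t>\<mu>. \<gamma> t = 0 \<Longrightarrow> \<gamma> \<in> I"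
  using mem_of_mdeg_ge[OF \<omega>_mingens _ _ \<mu>_range] \<omega>_zero by blast

lemma power_fI_mingens:
  assumes "1 \<le> i" "i < \<mu>"
  shows "(\<lambda>_. 0)(i := fI I i (\<lambda>_. 0)) \<in> mingens I"
proof -
  let ?d = "fI I i (\<lambda>_. 0)"
  have "(\<lambda>_. 0)(i := mdeg \<omega>) \<in> I"
    using assms \<mu>_range \<omega>_\<mu>_pos
    by (intro mem_of_mdeg_ge_\<omega>) (auto simp: monomial_in_def mdeg_power)
  then have mem: "(\<lambda>_. 0)(i := ?d) \<in> I"
    unfolding fI_def by (rule LeastI)
  show ?thesis
    unfolding mingens_def
  proof (intro CollectI conjI ballI impI mem)
    fix b assume b: "b \<in> I" "divides_mon b ((\<lambda>_. 0)(i := ?d))"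
    have b_eq: "b = (\<lambda>_. 0)(i := b i)"
    proof
      fix k show "b k = ((\<lambda>_. 0)(i := b i)) k"
        using b(2)[unfolded divides_mon_def, rule_format, of k] by (cases "k = i") auto
    qed
    then have "?d \<le> b i"
      unfolding fI_def using b(1) by (simp add: Least_le)
    moreover have "b i \<le> ?d" using b(2)[unfolded divides_mon_def, rule_format, of i] by simp
    ultimately show "b = (\<lambda>_. 0)(i := ?d)" using b_eq by simp
  qed
qed

lemma mdeg_le_fI:
  assumes "\<alpha> \<in> Iset I \<omega> \<mu> (i - 1)" "1 \<le> i" "i < \<mu>"
  shows "mdeg \<alpha> \<le> fI I i (\<lambda>_. 0)"
proof (rule ccontr)
  define d where "d = fI I i (\<lambda>_. 0)"
  assume "\<not> mdeg \<alpha> \<le> fI I i (\<lambda>_. 0)"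
  then have deg_gt: "d < mdeg \<alpha>" unfolding d_def by simp
  have gen: "(\<lambda>_. 0)(i := d) \<in> mingens I"
    unfolding d_def using power_fI_mingens assms(2,3) .
  have i_range: "i \<in> {1..n}" using assms(2,3) \<mu>_range by auto
  have m\<alpha>: "monomial_in n \<alpha>" using Iset_monomial_in assms(1) i_range by auto
  have "\<alpha> \<noteq> (\<lambda>_. 0)" using deg_gt by (auto simp: mdeg_def)
  then have "2 \<le> i" using Iset_support[OF assms(1)] by fastforce
  have "\<alpha> \<in> I"
  proof (cases "d = 0")
    case True
    have "(\<lambda>_. 0::nat)(i := 0) = (\<lambda>_. 0)" by auto
    with gen True have "(\<lambda>_. 0) \<in> I" unfolding mingens_def by simp
    then show ?thesis using mem_of_divides m\<alpha> by (simp add: divides_mon_def)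
  next
    case False
    show ?thesis
      by (rule mem_of_mdeg_ge[OF gen m\<alpha> _ i_range])
        (use False deg_gt Iset_zero[OF assms(1)] assms(2) in \<open>auto simp: mdeg_power\<close>)
  qed
  moreover have "\<alpha> \<notin> I" using Iset_not_mem assms(1) \<open>2 \<le> i\<close> by auto
  ultimately show False by blast
qed

lemma mdeg_add_fI_le:
  assumes "\<alpha> \<in> Iset I \<omega> \<mu> (i - 1)" "1 \<le> i" "i < \<mu>"
  shows "mdeg \<alpha> + fI I i \<alpha> \<le> fI I i (\<lambda>_. 0)"
proof -
  define d where "d = fI I i (\<lambda>_. 0)"
  have gen: "(\<lambda>_. 0)(i := d) \<in> mingens I"
    unfolding d_def using power_fI_mingens assms(2,3) .
  have "mdeg \<alpha> \<le> d" unfolding d_def using mdeg_le_fI assms .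
  have i_range: "i \<in> {1..n}" using assms(2,3) \<mu>_range by auto
  have m\<alpha>: "monomial_in n \<alpha>" using Iset_monomial_in assms(1) i_range by auto
  have \<alpha>_zero: "\<forall>t\<ge>i. \<alpha> t = 0" using Iset_zero[OF assms(1)] assms(2) by auto
  define \<gamma> where "\<gamma> = \<alpha>(i := d - mdeg \<alpha>)"
  have "\<gamma> \<in> I"
  proof (cases "\<alpha> = (\<lambda>_. 0)")
    case True
    then show ?thesis using gen unfolding \<gamma>_def mingens_def by (simp add: mdeg_def)
  next
    case False
    show ?thesis
    proof (rule almost_revlex_mem[OF gen _ _ i_range])
      show "monomial_in n \<gamma>" unfolding \<gamma>_def using monomial_in_upd m\<alpha> i_range by blast
      show "mdeg \<gamma> = mdeg ((\<lambda>_. 0)(i := d))"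
        using mdeg_upd[OF m\<alpha> i_range, of "d - mdeg \<alpha>"] \<alpha>_zero \<open>mdeg \<alpha> \<le> d\<close>
        unfolding \<gamma>_def by (simp add: mdeg_power)
      show "\<gamma> i < ((\<lambda>_. 0)(i := d)) i"
        using mdeg_pos[OF m\<alpha> False] \<open>mdeg \<alpha> \<le> d\<close> unfolding \<gamma>_def by simp
      show "\<forall>t\<in>{i<..n}. \<gamma> t = ((\<lambda>_. 0)(i := d)) t" unfolding \<gamma>_def using \<alpha>_zero by auto
    qed
  qed
  then have "fI I i \<alpha> \<le> d - mdeg \<alpha>" unfolding fI_def \<gamma>_def by (rule Least_le)
  with \<open>mdeg \<alpha> \<le> d\<close> show ?thesis unfolding d_def by simp
qed

text \<open>This is the only place where the extra condition \<open>\<beta> \<ge> (\<omega>\<^sub>1, ..., \<omega>\<^sub>\<mu>\<^sub>-\<^sub>1)\<close> in the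
  definition of \<open>\<I>\<^sub>\<mu>\<^sub>-\<^sub>1\<close> is used: it makes \<open>x^\<beta> x\<^sub>\<mu>^\<omega>\<^sub>\<mu>\<close> revlex-comparable with \<open>x^\<omega>\<close>.\<close>
lemma ex_extension_mem_last:
  assumes \<beta>: "\<beta> \<in> Iset I \<omega> \<mu> (\<mu> - 1)"
  shows "\<exists>t. \<beta>(\<mu> := t) \<in> I"
proof -
  have m\<beta>: "monomial_in n \<beta>" using Iset_monomial_in \<beta> \<mu>_range by auto
  have m\<beta>t: "monomial_in n (\<beta>(\<mu> := t))" for t
    using monomial_in_upd[OF m\<beta> \<mu>_range] .
  have \<beta>_zero: "\<forall>t\<ge>\<mu>. \<beta> t = 0" using Iset_zero[OF \<beta>] \<mu>_range by auto
  have mdeg_\<beta>t: "mdeg (\<beta>(\<mu> := t)) = mdeg \<beta> + t" for t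
    using mdeg_upd[OF m\<beta> \<mu>_range] \<beta>_zero by simp
  define \<omega>' where "\<omega>' = trunc \<mu> \<omega>"
  have \<omega>_eq: "\<omega> = \<omega>'(\<mu> := \<omega> \<mu>)"
    unfolding \<omega>'_def trunc_def using \<omega>_zero by (auto simp: not_less_iff_gr_or_eq)
  have "monomial_in n \<omega>'"
    using monomial_in_\<omega> unfolding \<omega>'_def trunc_def monomial_in_def by auto
  then have mdeg_\<omega>: "mdeg \<omega> = mdeg \<omega>' + \<omega> \<mu>"
    using mdeg_upd[OF _ \<mu>_range, of \<omega>' "\<omega> \<mu>"] \<omega>_eq by (simp add: \<omega>'_def trunc_def)
  have "revlex_le (\<mu> - 1) \<omega>' \<beta>" using \<beta> unfolding Iset_def \<omega>'_def by auto
  then consider "\<omega>' = \<beta>" | "mdeg \<omega>' < mdeg \<beta>"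
    | s where "mdeg \<omega>' = mdeg \<beta>" "s \<in> {1..\<mu> - 1}" "\<forall>t\<in>{s<..\<mu> - 1}. \<omega>' t = \<beta> t" "\<beta> s < \<omega>' s"
    unfolding revlex_le_def revlex_less_def by blast
  then show ?thesis
  proof cases
    case 1
    then have "\<beta>(\<mu> := \<omega> \<mu>) = \<omega>" using \<omega>_eq by simp
    moreover have "\<omega> \<in> I" using \<omega>_mingens unfolding mingens_def by blast
    ultimately show ?thesis by (metis (no_types))
  next
    case 2
    have "\<beta>(\<mu> := \<omega> \<mu> - 1) \<in> I"
      using 2 \<beta>_zero \<omega>_\<mu>_pos mdeg_\<omega>
      by (intro mem_of_mdeg_ge_\<omega> m\<beta>t) (auto simp: mdeg_\<beta>t)
    then show ?thesis by blast
  next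
    case (3 s)
    have "\<beta>(\<mu> := \<omega> \<mu>) \<in> I"
    proof (rule almost_revlex_mem[OF \<omega>_mingens m\<beta>t])
      show "mdeg (\<beta>(\<mu> := \<omega> \<mu>)) = mdeg \<omega>" using 3 mdeg_\<beta>t mdeg_\<omega> by simp
      show "s \<in> {1..n}" using 3 \<mu>_range by auto
      show "(\<beta>(\<mu> := \<omega> \<mu>)) s < \<omega> s"
        using 3 unfolding \<omega>'_def trunc_def by (auto split: if_splits)
      show "\<forall>t\<in>{s<..n}. (\<beta>(\<mu> := \<omega> \<mu>)) t = \<omega> t"
      proof
        fix t assume "t \<in> {s<..n}"
        then have "\<omega>' t = \<beta> t" if "t < \<mu>" using 3(3) that by auto
        then show "(\<beta>(\<mu> := \<omega> \<mu>)) t = \<omega> t"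
          using \<omega>_zero \<beta>_zero by (cases t \<mu> rule: linorder_cases) (auto simp: \<omega>'_def trunc_def)
      qed
    qed
    then show ?thesis by blast
  qed
qed

lemma ex_extension_mem:
  assumes \<beta>: "\<beta> \<in> Iset I \<omega> \<mu> i" and "i < \<mu>"
  shows "\<exists>t. \<beta>(Suc i := t) \<in> I"
proof (cases "Suc i < \<mu>")
  case True
  have Suc_i_range: "Suc i \<in> {1..n}" using True \<mu>_range by auto
  have m\<beta>: "monomial_in n \<beta>" using Iset_monomial_in \<beta> Suc_i_range by auto
  have "\<beta>(Suc i := mdeg \<omega>) \<in> I"
  proof (rule mem_of_mdeg_ge_\<omega>)
    show "monomial_in n (\<beta>(Suc i := mdeg \<omega>))" using monomial_in_upd[OF m\<beta> Suc_i_range] .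
    show "mdeg \<omega> \<le> mdeg (\<beta>(Suc i := mdeg \<omega>))"
      using mdeg_upd[OF m\<beta> Suc_i_range] Iset_zero[OF \<beta>, of "Suc i"] by simp
    show "(\<beta>(Suc i := mdeg \<omega>)) \<mu> < \<omega> \<mu>" using True Iset_zero[OF \<beta>] \<omega>_\<mu>_pos by auto
    show "\<forall>t>\<mu>. (\<beta>(Suc i := mdeg \<omega>)) t = 0" using True Iset_zero[OF \<beta>] by auto
  qed
  then show ?thesis by blast
next
  case False
  then have "\<mu> = Suc i" using assms(2) by simp
  then show ?thesis using ex_extension_mem_last \<beta> by simp
qed

lemma fI_le_mdeg_add_fI:
  assumes \<beta>: "\<beta> \<in> Iset I \<omega> \<mu> i" and "1 \<le> i" "i < \<mu>"
  shows "fI I i (\<lambda>_. 0) \<le> mdeg \<beta> + fI I (Suc i) \<beta>"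
proof -
  define e where "e = fI I (Suc i) \<beta>"
  have i_range: "i \<in> {1..n}" and Suc_i_range: "Suc i \<in> {1..n}" using assms \<mu>_range by auto
  have m\<beta>: "monomial_in n \<beta>" using Iset_monomial_in \<beta> i_range by auto
  have \<beta>e: "monomial_in n (\<beta>(Suc i := e))" "\<beta>(Suc i := e) \<in> I"
    using monomial_in_upd[OF m\<beta> Suc_i_range] ex_extension_mem[OF \<beta> assms(3)]
    unfolding e_def fI_def by (auto intro: LeastI)
  then obtain N where N: "N \<in> mingens I" "divides_mon N (\<beta>(Suc i := e))"
    using mingens_divides by blast
  have "mdeg N \<le> mdeg \<beta> + e"
    using mdeg_divides_le[OF \<beta>e(1) N(2)] mdeg_upd[OF m\<beta> Suc_i_range]
      Iset_zero[OF \<beta>, of "Suc i"] by simp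
  moreover have "N (Suc i) > 0"
  proof (rule ccontr)
    assume "\<not> N (Suc i) > 0"
    have "divides_mon N \<beta>" unfolding divides_mon_def
    proof
      fix j show "N j \<le> \<beta> j"
        using N(2)[unfolded divides_mon_def, rule_format, of j] \<open>\<not> N (Suc i) > 0\<close>
        by (cases "j = Suc i") auto
    qed
    then show False
      using mem_of_divides m\<beta> N(1) Iset_not_mem[OF \<beta> assms(2)] unfolding mingens_def by blast
  qed
  then have "(\<lambda>_. 0)(i := mdeg N) \<in> I"
    using almost_revlex_mem[OF N(1) _ mdeg_power Suc_i_range] i_range
      Iset_zero[OF \<beta>] divides_mon_zero[OF N(2)]
    by (auto simp: monomial_in_def)
  then have "fI I i (\<lambda>_. 0) \<le> mdeg N" unfolding fI_def by (rule Least_le)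
  ultimately show ?thesis unfolding e_def by simp
qed

end

theorem corollary2p13:
  fixes n \<mu> i :: nat and I :: "expo set" and \<omega> :: expo
  assumes "monomial_ideal n I"
    and "almost_revlex n I"
    and "last_generator n I \<omega>"
    and "\<mu> = maxvar \<omega>"
    and "\<omega> \<mu> > 0"
    and "\<mu> \<ge> 2"
    and "1 \<le> i" and "i \<le> \<mu> - 1"
  shows "(\<forall>\<alpha>\<in>Iset I \<omega> \<mu> (i - 1). \<forall>\<beta>\<in>Iset I \<omega> \<mu> i.
            mdeg \<alpha> + fI I i \<alpha> \<le> fI I i (\<lambda>_. 0) \<and>
            fI I i (\<lambda>_. 0) \<le> mdeg \<beta> + fI I (i + 1) \<beta>)
      \<and> (\<forall>N\<in>mingens I. \<forall>M\<in>mingens I. maxvar N < maxvar M \<longrightarrow> mdeg N \<le> mdeg M)"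
proof -
  interpret last_generator_ideal n I \<omega> \<mu>
    using assms(1-5) by unfold_locales
  have "i < \<mu>" using assms(6,8) by simp
  then show ?thesis
    using mdeg_add_fI_le fI_le_mdeg_add_fI mingens_mdeg_mono_maxvar assms(7) by simp
qed

end
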